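(* Let \(k\ge0\) and \(\lambda=(\lambda_1\ge\dots\ge\lambda_k\ge0)\). Then \[ \Sigma^{(k)}_\lambda=\bigsqcup_{J\succeq_k\lambda}\Sigma^{(k),\circ}_J, \] a disjoint union over strictly increasing sequences \(J\) of length at least \(k\) that \(k\)-dominate \(\lambda\).
   Context: \(\mathcal H\) is a separable infinite-dimensional complex Hilbert space with a fixed flag of closed subspaces \(\mathcal H=W_0\supset W_1\supset\cdots\), \(\mathrm{codim}_{\mathbb C}W_j=j\), \(\bigcap_jW_j=0\). \(\mathrm{Fred}_k\) denotes the bounded Fredholm operators of index \(k\). \(\Sigma^{(k)}_\lambda=\{T\in\mathrm{Fred}_k:\dim(\ker T\cap W_{\lambda_i+k-i})\ge i,\ i=1,\dots,k\}\). For \(J=(j_0<\dots<j_{r-1})\) of non-negative integers, an \(r\)-dimensional subspace \(V\) has exact type \(J\) if \(\dim(V\cap W_{j_q})=r-q\) and \(\dim(V\cap W_{j_q+1})=r-q-1\) for \(q=0,\dots,r-1\); \(\Sigma^{(k),\circ}_J=\{T\in\mathrm{Fred}_k:\ker T\text{ has exact type }J\}\). For \(J\) of length \(r\ge k\), \(J\succeq_k\lambda\) means \(j_{r-i}\ge\lambda_i+k-i\) for \(i=1,\dots,k\). *)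

theory Defs
  imports "HOL-Analysis.Analysis"
begin

text \<open>A complex Hilbert space is modelled as a real Banach space 'h together with a
complex scalar multiplication sc (extending the real one) and a complex inner
product ip (conjugate-linear in the first slot) inducing the norm.\<close>

definition is_chilbert :: "(complex \<Rightarrow> 'h::banach \<Rightarrow> 'h) \<Rightarrow> ('h \<Rightarrow> 'h \<Rightarrow> complex) \<Rightarrow> bool" where
  "is_chilbert sc ip \<longleftrightarrow>
     (\<forall>r x. sc (complex_of_real r) x = r *\<^sub>R x) \<and>
     (\<forall>a b x. sc (a * b) x = sc a (sc b x)) \<and>
     (\<forall>a b x. sc (a + b) x = sc a x + sc b x) \<and>
     (\<forall>a x y. sc a (x + y) = sc a x + sc a y) \<and>
     (\<forall>x y z. ip (x + y) z = ip x z + ip y z) \<and>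
     (\<forall>a x y. ip (sc a x) y = cnj a * ip x y) \<and>
     (\<forall>x y. ip y x = cnj (ip x y)) \<and>
     (\<forall>x. Im (ip x x) = 0 \<and> norm x = sqrt (Re (ip x x)))"

definition csubspace :: "(complex \<Rightarrow> 'h::real_vector \<Rightarrow> 'h) \<Rightarrow> 'h set \<Rightarrow> bool" where
  "csubspace sc S \<longleftrightarrow> 0 \<in> S \<and> (\<forall>x\<in>S. \<forall>y\<in>S. x + y \<in> S) \<and> (\<forall>a. \<forall>x\<in>S. sc a x \<in> S)"

definition cspan :: "(complex \<Rightarrow> 'h::real_vector \<Rightarrow> 'h) \<Rightarrow> 'h set \<Rightarrow> 'h set" where
  "cspan sc B = \<Inter>{S. csubspace sc S \<and> B \<subseteq> S}"

definition cindependent :: "(complex \<Rightarrow> 'h::real_vector \<Rightarrow> 'h) \<Rightarrow> 'h set \<Rightarrow> bool" where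
  "cindependent sc B \<longleftrightarrow> (\<forall>F c. finite F \<and> F \<subseteq> B \<and> (\<Sum>b\<in>F. sc (c b) b) = 0 \<longrightarrow> (\<forall>b\<in>F. c b = 0))"

definition cfindim :: "(complex \<Rightarrow> 'h::real_vector \<Rightarrow> 'h) \<Rightarrow> 'h set \<Rightarrow> bool" where
  "cfindim sc S \<longleftrightarrow> (\<exists>B. finite B \<and> cspan sc B = S)"

definition cdim :: "(complex \<Rightarrow> 'h::real_vector \<Rightarrow> 'h) \<Rightarrow> 'h set \<Rightarrow> nat" where
  "cdim sc S = (LEAST n. \<exists>B. finite B \<and> card B = n \<and> cspan sc B = S)"

definition ccodim_eq :: "(complex \<Rightarrow> 'h::real_vector \<Rightarrow> 'h) \<Rightarrow> 'h set \<Rightarrow> nat \<Rightarrow> bool" where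
  "ccodim_eq sc S n \<longleftrightarrow> (\<exists>B. finite B \<and> card B = n \<and> cindependent sc B \<and>
      cspan sc B \<inter> S = {0} \<and> {x + y | x y. x \<in> cspan sc B \<and> y \<in> S} = UNIV)"

definition cbounded_op :: "(complex \<Rightarrow> 'h::real_normed_vector \<Rightarrow> 'h) \<Rightarrow> ('h \<Rightarrow> 'h) \<Rightarrow> bool" where
  "cbounded_op sc T \<longleftrightarrow> bounded_linear T \<and> (\<forall>a x. T (sc a x) = sc a (T x))"

definition opker :: "('h::real_vector \<Rightarrow> 'h) \<Rightarrow> 'h set" where
  "opker T = {x. T x = 0}"

definition Fred :: "(complex \<Rightarrow> 'h::real_normed_vector \<Rightarrow> 'h) \<Rightarrow> int \<Rightarrow> ('h \<Rightarrow> 'h) set" where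
  "Fred sc k = {T. cbounded_op sc T \<and> cfindim sc (opker T) \<and> closed (range T) \<and>
      (\<exists>c. ccodim_eq sc (range T) c \<and> int (cdim sc (opker T)) - int c = k)}"

definition is_flag :: "(complex \<Rightarrow> 'h::real_normed_vector \<Rightarrow> 'h) \<Rightarrow> (nat \<Rightarrow> 'h set) \<Rightarrow> bool" where
  "is_flag sc W \<longleftrightarrow> W 0 = UNIV \<and> (\<forall>j. closed (W j) \<and> csubspace sc (W j) \<and> W (Suc j) \<subseteq> W j
      \<and> ccodim_eq sc (W j) j) \<and> (\<Inter>j. W j) = {0}"

text \<open>Partition lam = (lam_1 \<ge> ... \<ge> lam_k), stored 0-indexed: lam_i = lam ! (i-1).\<close>
definition Sigma_lam :: "(complex \<Rightarrow> 'h::real_normed_vector \<Rightarrow> 'h) \<Rightarrow> (nat \<Rightarrow> 'h set) \<Rightarrow> nat \<Rightarrow> nat list \<Rightarrow> ('h \<Rightarrow> 'h) set" where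
  "Sigma_lam sc W k lam = {T \<in> Fred sc (int k).
      \<forall>i\<in>{1..k}. cdim sc (opker T \<inter> W (lam ! (i - 1) + k - i)) \<ge> i}"

definition exact_type :: "(complex \<Rightarrow> 'h::real_normed_vector \<Rightarrow> 'h) \<Rightarrow> (nat \<Rightarrow> 'h set) \<Rightarrow> 'h set \<Rightarrow> nat list \<Rightarrow> bool" where
  "exact_type sc W V J \<longleftrightarrow> (let r = length J in cdim sc V = r \<and>
     (\<forall>q<r. cdim sc (V \<inter> W (J ! q)) = r - q \<and> cdim sc (V \<inter> W (J ! q + 1)) = r - q - 1))"

definition Sigma_circ :: "(complex \<Rightarrow> 'h::real_normed_vector \<Rightarrow> 'h) \<Rightarrow> (nat \<Rightarrow> 'h set) \<Rightarrow> nat \<Rightarrow> nat list \<Rightarrow> ('h \<Rightarrow> 'h) set" where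
  "Sigma_circ sc W k J = {T \<in> Fred sc (int k). exact_type sc W (opker T) J}"

definition kdominates :: "nat \<Rightarrow> nat list \<Rightarrow> nat list \<Rightarrow> bool" where
  "kdominates k J lam \<longleftrightarrow> length J \<ge> k \<and>
     (\<forall>i\<in>{1..k}. J ! (length J - i) \<ge> lam ! (i - 1) + k - i)"

end

theory Submission
  imports Defs
begin

text \<open>For T in Fred_k the kernel V is finite-dimensional, of dimension r \<ge> k. The function
  d j = dim (V \<inter> W_j) falls from r to 0, and by at most one at each step because W_(j+1) has
  codimension one in W_j. Hence V has exactly one exact type J: the r positions where d drops.
  Moreover, for 1 \<le> i \<le> r we get i \<le> d m iff m \<le> j_(r-i). With m = lam_i + k - i this turns the
  incidence conditions that define Sigma_lam into the domination J \<succeq>_k lam.\<close>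

context vector_space
begin

lemma finite_basis_exists:
  assumes "V \<subseteq> span F" "finite F"
  obtains B where "finite B" "B \<subseteq> V" "independent B" "V \<subseteq> span B" "card B = dim V"
proof -
  obtain B where "B \<subseteq> V" "independent B" "V \<subseteq> span B" "card B = dim V"
    using basis_exists by blast
  moreover have "finite B"
    using independent_span_bound[OF assms(2) \<open>independent B\<close>] \<open>B \<subseteq> V\<close> assms(1) by blast
  ultimately show thesis using that by blast
qed

lemma dim_mono_findim:
  assumes "A \<subseteq> B" "B \<subseteq> span F" "finite F"
  shows "dim A \<le> dim B"
proof -
  obtain C where "finite C" "B \<subseteq> span C" "card C = dim B"
    using finite_basis_exists[OF assms(2,3)] by metis
  then show ?thesis using dim_le_card[of A C] assms(1) by auto
qed

lemma dim_less_findim: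
  assumes "subspace A" "A \<subset> B" "B \<subseteq> span F" "finite F"
  shows "dim A < dim B"
proof -
  obtain C where C: "finite C" "C \<subseteq> A" "independent C" "A \<subseteq> span C" "card C = dim A"
    using finite_basis_exists[of A F] assms by blast
  obtain b where b: "b \<in> B" "b \<notin> A" using assms(2) by blast
  have "span C = A" using span_subspace[OF C(2,4) assms(1)] .
  then have "b \<notin> span C" using b by simp
  then have "independent (insert b C)" using independent_insertI C(3) by blast
  moreover obtain D where "finite D" "B \<subseteq> span D" "card D = dim B"
    using finite_basis_exists[OF assms(3,4)] by metis
  moreover have "insert b C \<subseteq> B" using b C(2) assms(2) by blast
  ultimately have "card (insert b C) \<le> dim B"
    using independent_span_bound[of D "insert b C"] by auto
  moreover have "b \<notin> C" using \<open>b \<notin> span C\<close> span_base by blast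
  ultimately show ?thesis using C(1,5) by simp
qed

lemma span_Int_span_disjoint:
  assumes "independent D" "C \<subseteq> D" "E \<subseteq> D" "C \<inter> E = {}"
  shows "span C \<inter> span E = {0}"
proof safe
  fix v assume "v \<in> span C" "v \<in> span E"
  then obtain s a t b where st: "finite s" "s \<subseteq> C" "finite t" "t \<subseteq> E"
      and v: "v = (\<Sum>x\<in>s. scale (a x) x)" "v = (\<Sum>x\<in>t. scale (b x) x)"
    unfolding span_explicit by blast
  define u where "u x = (if x \<in> s then a x else - b x)" for x
  have "s \<inter> t = {}" using st assms(4) by blast
  have "(\<Sum>x\<in>s. scale (u x) x) = v"
    unfolding v(1) u_def by (auto intro: sum.cong)
  moreover have "(\<Sum>x\<in>t. scale (u x) x) = - v"
    unfolding v(2) u_def using \<open>s \<inter> t = {}\<close> by (auto simp: sum_negf[symmetric] intro!: sum.cong)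
  ultimately have "(\<Sum>x\<in>s \<union> t. scale (u x) x) = 0"
    by (simp add: sum.union_disjoint[OF st(1,3) \<open>s \<inter> t = {}\<close>])
  then have "u x = 0" if "x \<in> s" for x
    using independentD[OF assms(1), of "s \<union> t" u x] st assms(2,3) that by blast
  then show "v = 0" using v(1) by (simp add: u_def)
qed (simp_all add: span_zero)

lemma independent_Un_span_disjoint:
  assumes "independent A" "independent B" "span A \<inter> span B \<subseteq> {0}"
  shows "independent (A \<union> B)"
proof
  assume "dependent (A \<union> B)"
  then obtain t u where t: "finite t" "t \<subseteq> A \<union> B" "(\<Sum>v\<in>t. scale (u v) v) = 0" "\<exists>v\<in>t. u v \<noteq> 0"
    unfolding dependent_explicit by blast
  define tA tB where "tA = t \<inter> A" and "tB = t - A"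
  have fin: "finite tA" "finite tB" and sub: "tA \<subseteq> A" "tB \<subseteq> B"
    using t(1,2) by (auto simp: tA_def tB_def)
  have sum0: "(\<Sum>v\<in>tA. scale (u v) v) + (\<Sum>v\<in>tB. scale (u v) v) = 0"
    using t(3) sum.union_disjoint[OF fin, of "\<lambda>v. scale (u v) v"]
    by (simp add: tA_def tB_def Int_Diff_Un Int_Diff_disjoint)
  have "(\<Sum>v\<in>tA. scale (u v) v) \<in> span A" "(\<Sum>v\<in>tB. scale (u v) v) \<in> span B"
    using sub by (auto intro!: span_sum span_scale intro: span_base)
  moreover have "(\<Sum>v\<in>tA. scale (u v) v) = - (\<Sum>v\<in>tB. scale (u v) v)"
    using sum0 by (simp add: add_eq_0_iff2)
  ultimately have "(\<Sum>v\<in>tA. scale (u v) v) \<in> span A \<inter> span B"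
    using span_neg by auto
  then have "(\<Sum>v\<in>tA. scale (u v) v) = 0" "(\<Sum>v\<in>tB. scale (u v) v) = 0"
    using assms(3) sum0 by auto
  then have "u v = 0" if "v \<in> t" for v
    using that independentD[OF assms(1) fin(1) sub(1)] independentD[OF assms(2) fin(2) sub(2)]
    by (cases "v \<in> A") (auto simp: tA_def tB_def)
  then show False using t(4) by blast
qed

lemma card_le_codim:
  assumes B: "finite B" "span B \<inter> S = {0}" "{x + y | x y. x \<in> span B \<and> y \<in> S} = UNIV"
    and S: "subspace S"
    and U: "independent U" "span U \<inter> S \<subseteq> {0}"
  shows "finite U \<and> card U \<le> card B"
proof -
  have unique: "y = y'" if "y \<in> span B" "x - y \<in> S" "y' \<in> span B" "x - y' \<in> S" for x y y'
  proof -
    have "y - y' \<in> S" using subspace_diff[OF S that(4,2)] by simp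
    moreover have "y - y' \<in> span B" using span_diff that(1,3) by blast
    ultimately have "y - y' \<in> span B \<inter> S" by blast
    then show ?thesis unfolding B(2) by simp
  qed
  \<comment> \<open>The projection p onto span B along S is linear with kernel S, hence injective on span U;
    so it maps U onto an independent subset of span B.\<close>
  define p where "p x = (THE y. y \<in> span B \<and> x - y \<in> S)" for x
  have p_eq: "p x = y" if "y \<in> span B" "x - y \<in> S" for x y
    unfolding p_def by (rule the_equality) (use that unique in blast)+
  have p: "p x \<in> span B \<and> x - p x \<in> S" for x
  proof -
    have "x \<in> {x + y | x y. x \<in> span B \<and> y \<in> S}" using B(3) by simp
    then obtain y z where "x = y + z" "y \<in> span B" "z \<in> S" by blast
    then have "x - y \<in> S" by simp
    then show ?thesis using p_eq \<open>y \<in> span B\<close> by blast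
  qed
  have "module_hom scale scale p"
  proof (unfold module_hom_iff, intro conjI allI)
    show "p (x + y) = p x + p y" for x y
    proof (rule p_eq)
      show "p x + p y \<in> span B" using p span_add by blast
      have "(x - p x) + (y - p y) \<in> S" using p subspace_add[OF S] by blast
      then show "x + y - (p x + p y) \<in> S" by (simp add: diff_add_eq algebra_simps)
    qed
    show "p (scale c x) = scale c (p x)" for c x
      using p[of x] subspace_scale[OF S, of "x - p x" c]
      by (intro p_eq span_scale) (auto simp: scale_right_diff_distrib)
  qed (simp_all add: module_axioms)
  then interpret p: module_hom scale scale p .
  have inj: "inj_on p (span U)"
  proof (rule inj_onI)
    fix x y assume xy: "x \<in> span U" "y \<in> span U" "p x = p y"
    have "p (x - y) = 0" using xy(3) by (simp add: p.diff)
    then have "x - y \<in> S" using p[of "x - y"] by simp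
    moreover have "x - y \<in> span U" using span_diff xy(1,2) by blast
    ultimately have "x - y \<in> span U \<inter> S" by blast
    then have "x - y = 0" using U(2) by blast
    then show "x = y" by simp
  qed
  have "independent (p ` U)" using p.independent_injective_image[OF U(1) inj] .
  moreover have "p ` U \<subseteq> span B" using p by blast
  ultimately have "finite (p ` U)" "card (p ` U) \<le> card B"
    using independent_span_bound[OF B(1)] by blast+
  moreover have "inj_on p U" using inj_on_subset[OF inj span_superset] .
  ultimately show ?thesis using finite_image_iff card_image by metis
qed

lemma independent_complement_exists:
  assumes "Y \<subseteq> Z" "Z \<subseteq> span F" "finite F" "subspace Z"
  obtains E where "finite E" "independent E" "span E \<subseteq> Z" "span E \<inter> Y \<subseteq> {0}"
    "dim Z = dim Y + card E"
proof -
  obtain C where C: "finite C" "C \<subseteq> Y" "independent C" "Y \<subseteq> span C" "card C = dim Y"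
    using finite_basis_exists[of Y F] assms(1-3) by blast
  obtain D where D: "C \<subseteq> D" "D \<subseteq> Z" "independent D" "Z \<subseteq> span D"
    using maximal_independent_subset_extend[of C Z] C(2,3) assms(1) by blast
  have "finite D" using independent_span_bound[OF assms(3) D(3)] D(2) assms(2) by blast
  have "card D = dim Z" using basis_card_eq_dim[OF D(2,4,3)] .
  show thesis
  proof
    show "finite (D - C)" using \<open>finite D\<close> by simp
    show "independent (D - C)" using independent_mono[OF D(3)] by blast
    show "span (D - C) \<subseteq> Z" using span_minimal[OF _ assms(4)] D(2) by blast
    show "span (D - C) \<inter> Y \<subseteq> {0}"
      using span_Int_span_disjoint[OF D(3) D(1), of "D - C"] C(4) by blast
    show "dim Z = dim Y + card (D - C)"
      using card_Diff_subset[OF C(1) D(1)] card_mono[OF \<open>finite D\<close> D(1)] C(5) \<open>card D = dim Z\<close>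
      by simp
  qed
qed

lemma dim_Int_add_card_le:
  assumes F: "finite F"
    and Wa: "subspace Wa" and Wb: "subspace Wb" "Wb \<subseteq> Wa"
    and Ba: "independent Ba" "span Ba \<inter> Wa = {0}"
    and Bb: "finite Bb" "span Bb \<inter> Wb = {0}" "{x + y | x y. x \<in> span Bb \<and> y \<in> Wb} = UNIV"
  shows "dim (span F \<inter> Wa) + card Ba \<le> dim (span F \<inter> Wb) + card Bb"
proof -
  \<comment> \<open>Ba together with a complement E of span F \<inter> Wb in span F \<inter> Wa is independent and meets Wb
    only in 0, so by card_le_codim it has at most card Bb elements.\<close>
  obtain E where E: "finite E" "independent E" "span E \<subseteq> span F \<inter> Wa"
      "span E \<inter> (span F \<inter> Wb) \<subseteq> {0}" "dim (span F \<inter> Wa) = dim (span F \<inter> Wb) + card E"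
    using independent_complement_exists[of "span F \<inter> Wb" "span F \<inter> Wa" F]
      F Wb(2) subspace_inter[OF subspace_span Wa] by blast
  have Ba_E: "span Ba \<inter> span E \<subseteq> {0}" using E(3) Ba(2) by blast
  have "span (Ba \<union> E) \<inter> Wb \<subseteq> {0}"
  proof
    fix v assume v: "v \<in> span (Ba \<union> E) \<inter> Wb"
    then obtain a e where ae: "v = a + e" "a \<in> span Ba" "e \<in> span E"
      unfolding span_Un by blast
    have "a = v - e" using ae(1) by simp
    moreover have "v - e \<in> Wa" using subspace_diff[OF Wa] v Wb(2) ae(3) E(3) by blast
    ultimately have "a \<in> span Ba \<inter> Wa" using ae(2) by blast
    then have "a = 0" unfolding Ba(2) by simp
    then have "v \<in> span E \<inter> (span F \<inter> Wb)" using v ae E(3) by auto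
    then show "v \<in> {0}" using E(4) by blast
  qed
  then have "finite (Ba \<union> E)" "card (Ba \<union> E) \<le> card Bb"
    using card_le_codim[OF Bb Wb(1) independent_Un_span_disjoint[OF Ba(1) E(2) Ba_E]] by blast+
  moreover have "Ba \<inter> E = {}"
  proof (rule ccontr)
    assume "Ba \<inter> E \<noteq> {}"
    then obtain b where "b \<in> Ba" "b \<in> E" by blast
    then have "b = 0" using Ba_E span_base by blast
    then show False using \<open>b \<in> E\<close> E(2) dependent_zero by blast
  qed
  ultimately have "card Ba + card E \<le> card Bb" using card_Un_disjoint by (metis finite_Un)
  then show ?thesis using E(5) by simp
qed

lemma dim_Int_eventually_zero:
  assumes F: "finite F" and W: "\<And>j. subspace (W j)" "decseq W" "(\<Inter>j. W j) = {0}"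
  shows "\<exists>N. dim (span F \<inter> W N) = 0"
proof -
  obtain N where N: "\<And>j. dim (span F \<inter> W N) \<le> dim (span F \<inter> W j)"
    using ex_has_least_nat[of "\<lambda>_. True" 0 "\<lambda>j. dim (span F \<inter> W j)"] by blast
  have "span F \<inter> W N \<subseteq> {0}"
  proof
    fix x assume x: "x \<in> span F \<inter> W N"
    show "x \<in> {0}"
    proof (rule ccontr)
      assume "x \<notin> {0}"
      then obtain M where "x \<notin> W M" using W(3) by blast
      then have "W M \<subset> W N" using x decseqD[OF W(2), of M N] decseqD[OF W(2), of N M]
        by (cases "M \<le> N") auto
      then have "span F \<inter> W M \<subset> span F \<inter> W N" using x \<open>x \<notin> W M\<close> by blast
      then have "dim (span F \<inter> W M) < dim (span F \<inter> W N)"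
        using dim_less_findim[OF subspace_inter[OF subspace_span W(1)] _ _ F] by blast
      then show False using N[of M] by simp
    qed
  qed
  then show ?thesis using dim_le_card[of "span F \<inter> W N" "{}"] by auto
qed

end

definition jumps_at :: "(nat \<Rightarrow> nat) \<Rightarrow> nat list \<Rightarrow> bool" where
  "jumps_at d J \<longleftrightarrow>
     (\<forall>q<length J. d (J ! q) = length J - q \<and> d (J ! q + 1) = length J - q - 1)"

lemma jumps_at_le_iff:
  assumes d: "antimono d" and J: "jumps_at d J" and i: "i \<in> {1..length J}"
  shows "i \<le> d m \<longleftrightarrow> m \<le> J ! (length J - i)"
proof -
  define q where "q = length J - i"
  have "q < length J" using i by (auto simp: q_def)
  then have jump: "d (J ! q) = i" "d (J ! q + 1) = i - 1"
    using J i by (auto simp: jumps_at_def q_def)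
  show ?thesis unfolding q_def[symmetric]
  proof
    assume "i \<le> d m"
    show "m \<le> J ! q"
    proof (rule ccontr)
      assume "\<not> m \<le> J ! q"
      then have "d m \<le> d (J ! q + 1)" using antimonoD[OF d] by simp
      moreover have "1 \<le> i" using i by simp
      ultimately show False using \<open>i \<le> d m\<close> jump(2) by linarith
    qed
  next
    assume "m \<le> J ! q"
    then show "i \<le> d m" using antimonoD[OF d] jump(1) by metis
  qed
qed

lemma jumps_at_unique:
  assumes d: "antimono d" and J: "jumps_at d J" "jumps_at d J'" "length J = length J'"
  shows "J = J'"
proof (rule nth_equalityI)
  show "length J = length J'" by fact
  fix q assume "q < length J"
  then have i: "length J - q \<in> {1..length J}" and q: "length J - (length J - q) = q" by auto
  have "m \<le> J ! q \<longleftrightarrow> m \<le> J' ! q" for m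
    using jumps_at_le_iff[OF d J(1) i, of m] jumps_at_le_iff[OF d J(2), of "length J - q" m] i q J(3)
    by simp
  then show "J ! q = J' ! q" by (meson order.antisym order.refl)
qed

lemma jumps_at_exists:
  assumes d: "antimono d" and step: "\<And>j. d j \<le> Suc (d (Suc j))" and N: "d N = 0"
  shows "\<exists>J. length J = d 0 \<and> sorted_wrt (<) J \<and> jumps_at d J"
proof -
  define r where "r = d 0"
  \<comment> \<open>f q is the last index at which d is still at least r - q.\<close>
  define f where "f q = (LEAST j. d (Suc j) < r - q)" for q
  have jump: "d (f q) = r - q \<and> d (f q + 1) = r - q - 1" if "q < r" for q
  proof -
    have "d (Suc N) < r - q" using antimonoD[OF d, of N "Suc N"] N that by simp
    then have below: "d (Suc (f q)) < r - q" unfolding f_def by (rule LeastI)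
    have above: "r - q \<le> d (f q)"
    proof (cases "f q")
      case (Suc j)
      then have "\<not> d (Suc j) < r - q" unfolding f_def by (metis lessI not_less_Least)
      then show ?thesis using Suc by simp
    qed (simp add: r_def)
    show ?thesis using below above step[of "f q"] by simp
  qed
  define J where "J = map f [0..<r]"
  have "jumps_at d J" using jump by (simp add: jumps_at_def J_def)
  moreover have "sorted_wrt (<) J"
    unfolding sorted_wrt_iff_nth_less
  proof (intro allI impI)
    fix i j assume ij: "i < j" "j < length J"
    show "J ! i < J ! j"
    proof (rule ccontr)
      assume "\<not> J ! i < J ! j"
      then have "d (J ! i) \<le> d (J ! j)" using antimonoD[OF d] by simp
      then show False using ij jump[of i] jump[of j] by (simp add: J_def)
    qed
  qed
  moreover have "length J = d 0" by (simp add: J_def r_def)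
  ultimately show ?thesis by blast
qed

lemma vector_space_if_chilbert:
  assumes "is_chilbert sc ip"
  shows "vector_space sc"
proof -
  have "sc 1 x = x" for x
    using assms of_real_1 scaleR_one unfolding is_chilbert_def by metis
  then show ?thesis
    using assms unfolding vector_space_def is_chilbert_def by (simp add: mult.commute)
qed

context
  fixes sc :: "complex \<Rightarrow> 'h::real_vector \<Rightarrow> 'h"
  assumes vs: "vector_space sc"
begin

interpretation vector_space sc by (fact vs)

lemma csubspace_eq_subspace: "csubspace sc = subspace"
  by (simp add: csubspace_def subspace_def fun_eq_iff)

lemma cspan_eq_span: "cspan sc = span"
  by (simp add: cspan_def span_def hull_def csubspace_eq_subspace fun_eq_iff)

lemma cindependent_iff_independent: "cindependent sc B \<longleftrightarrow> independent B"
  unfolding cindependent_def dependent_explicit by blast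

lemma cdim_eq_dim:
  assumes "subspace S" "S \<subseteq> span F" "finite F"
  shows "cdim sc S = dim S"
proof -
  obtain B where B: "finite B" "B \<subseteq> S" "independent B" "S \<subseteq> span B" "card B = dim S"
    using finite_basis_exists[OF assms(2,3)] .
  have "span B = S" using span_subspace[OF B(2,4) assms(1)] .
  show ?thesis unfolding cdim_def cspan_eq_span
  proof (rule Least_equality)
    show "\<exists>B. finite B \<and> card B = dim S \<and> span B = S" using B \<open>span B = S\<close> by blast
  next
    fix n assume "\<exists>B. finite B \<and> card B = n \<and> span B = S"
    then show "dim S \<le> n" using dim_le_card by blast
  qed
qed

end

lemma exact_type_iff_jumps_at:
  "exact_type sc W V J \<longleftrightarrow> cdim sc V = length J \<and> jumps_at (\<lambda>j. cdim sc (V \<inter> W j)) J"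
  by (simp add: exact_type_def jumps_at_def Let_def)

lemma Fred_kernelD:
  assumes "T \<in> Fred sc (int k)"
  shows "cfindim sc (opker T)" "k \<le> cdim sc (opker T)"
  using assms unfolding Fred_def by auto

context
  fixes sc :: "complex \<Rightarrow> 'h::real_normed_vector \<Rightarrow> 'h" and W :: "nat \<Rightarrow> 'h set"
  assumes vs: "vector_space sc" and flag: "is_flag sc W"
begin

interpretation vector_space sc by (fact vs)

lemma is_flagD:
  "W 0 = UNIV" "subspace (W j)" "decseq W" "(\<Inter>j. W j) = {0}" "ccodim_eq sc (W j) j"
  using flag decseq_SucI[of W] by (simp_all add: is_flag_def csubspace_eq_subspace[OF vs])

lemma flag_complement:
  obtains B where "finite B" "card B = j" "independent B" "span B \<inter> W j = {0}"
    "{x + y | x y. x \<in> span B \<and> y \<in> W j} = UNIV"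
  using is_flagD(5)[of j] that
  unfolding ccodim_eq_def cspan_eq_span[OF vs] cindependent_iff_independent[OF vs] by blast

lemma cdim_span_Int_flag: "finite F \<Longrightarrow> cdim sc (span F \<inter> W j) = dim (span F \<inter> W j)"
  by (rule cdim_eq_dim[OF vs]) (auto intro: subspace_inter is_flagD(2))

lemma cfindimE:
  assumes "cfindim sc V"
  obtains F where "finite F" "V = span F"
  using assms unfolding cfindim_def cspan_eq_span[OF vs] by blast

lemma antimono_cdim_Int_flag:
  assumes "cfindim sc V"
  shows "antimono (\<lambda>j. cdim sc (V \<inter> W j))"
proof (rule antimonoI)
  fix j j' :: nat assume "j \<le> j'"
  then have "W j' \<subseteq> W j" using decseqD[OF is_flagD(3)] by blast
  obtain F where "finite F" "V = span F" using cfindimE[OF assms] .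
  then show "cdim sc (V \<inter> W j') \<le> cdim sc (V \<inter> W j)"
    using dim_mono_findim[of "span F \<inter> W j'" "span F \<inter> W j" F] \<open>W j' \<subseteq> W j\<close>
    by (auto simp: cdim_span_Int_flag)
qed

lemma cdim_Int_flag_le_Suc:
  assumes "cfindim sc V"
  shows "cdim sc (V \<inter> W j) \<le> Suc (cdim sc (V \<inter> W (Suc j)))"
proof -
  obtain F where F: "finite F" "V = span F" using cfindimE[OF assms] .
  obtain Ba where Ba: "finite Ba" "card Ba = j" "independent Ba" "span Ba \<inter> W j = {0}"
      "{x + y | x y. x \<in> span Ba \<and> y \<in> W j} = UNIV"
    by (rule flag_complement)
  obtain Bb where Bb: "finite Bb" "card Bb = Suc j" "independent Bb" "span Bb \<inter> W (Suc j) = {0}"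
      "{x + y | x y. x \<in> span Bb \<and> y \<in> W (Suc j)} = UNIV"
    by (rule flag_complement)
  have "W (Suc j) \<subseteq> W j" using decseqD[OF is_flagD(3)] by simp
  then show ?thesis
    using dim_Int_add_card_le[OF F(1) is_flagD(2) is_flagD(2) _ Ba(3,4) Bb(1,4,5)] Ba(2) Bb(2)
    by (simp add: F cdim_span_Int_flag)
qed

lemma cdim_Int_flag_eventually_zero:
  assumes "cfindim sc V"
  shows "\<exists>N. cdim sc (V \<inter> W N) = 0"
proof -
  obtain F where F: "finite F" "V = span F" using cfindimE[OF assms] .
  show ?thesis
    using dim_Int_eventually_zero[OF F(1) is_flagD(2-4)] by (simp add: F cdim_span_Int_flag)
qed

lemma exact_type_exists:
  assumes "cfindim sc V"
  shows "\<exists>J. sorted_wrt (<) J \<and> exact_type sc W V J"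
proof -
  obtain N where "cdim sc (V \<inter> W N) = 0" using cdim_Int_flag_eventually_zero[OF assms] ..
  then obtain J where "length J = cdim sc V" "sorted_wrt (<) J" "jumps_at (\<lambda>j. cdim sc (V \<inter> W j)) J"
    using jumps_at_exists[OF antimono_cdim_Int_flag[OF assms] cdim_Int_flag_le_Suc[OF assms]]
      is_flagD(1) by auto
  then show ?thesis by (auto simp: exact_type_iff_jumps_at)
qed

lemma exact_type_unique:
  assumes "cfindim sc V" "exact_type sc W V J" "exact_type sc W V J'"
  shows "J = J'"
  using assms(2,3) jumps_at_unique[OF antimono_cdim_Int_flag[OF assms(1)]]
  by (simp add: exact_type_iff_jumps_at)

lemma exact_type_le_cdim_iff:
  assumes "cfindim sc V" "exact_type sc W V J" "i \<in> {1..length J}"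
  shows "i \<le> cdim sc (V \<inter> W m) \<longleftrightarrow> m \<le> J ! (length J - i)"
  using assms(2,3) jumps_at_le_iff[OF antimono_cdim_Int_flag[OF assms(1)]]
  by (simp add: exact_type_iff_jumps_at)

lemma Sigma_circ_kdominates_iff:
  assumes "T \<in> Sigma_circ sc W k J"
  shows "kdominates k J lam \<longleftrightarrow>
    (\<forall>i\<in>{1..k}. i \<le> cdim sc (opker T \<inter> W (lam ! (i - 1) + k - i)))"
proof -
  have T: "T \<in> Fred sc (int k)" "exact_type sc W (opker T) J"
    using assms by (auto simp: Sigma_circ_def)
  then have "k \<le> length J" using Fred_kernelD(2)[OF T(1)] by (simp add: exact_type_def Let_def)
  then show ?thesis
    using exact_type_le_cdim_iff[OF Fred_kernelD(1)[OF T(1)] T(2)] by (auto simp: kdominates_def)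
qed

lemma Sigma_lam_iff_Sigma_circ:
  "T \<in> Sigma_lam sc W k lam \<longleftrightarrow>
    (\<exists>J. sorted_wrt (<) J \<and> kdominates k J lam \<and> T \<in> Sigma_circ sc W k J)"
proof
  assume T: "T \<in> Sigma_lam sc W k lam"
  then have "T \<in> Fred sc (int k)" by (simp add: Sigma_lam_def)
  then obtain J where "sorted_wrt (<) J" "T \<in> Sigma_circ sc W k J"
    using exact_type_exists[OF Fred_kernelD(1)] by (auto simp: Sigma_circ_def)
  then show "\<exists>J. sorted_wrt (<) J \<and> kdominates k J lam \<and> T \<in> Sigma_circ sc W k J"
    using T Sigma_circ_kdominates_iff by (auto simp: Sigma_lam_def)
next
  assume "\<exists>J. sorted_wrt (<) J \<and> kdominates k J lam \<and> T \<in> Sigma_circ sc W k J"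
  then show "T \<in> Sigma_lam sc W k lam"
    using Sigma_circ_kdominates_iff by (auto simp: Sigma_lam_def Sigma_circ_def)
qed

lemma Sigma_circ_disjoint: "J \<noteq> J' \<Longrightarrow> Sigma_circ sc W k J \<inter> Sigma_circ sc W k J' = {}"
  using exact_type_unique[OF Fred_kernelD(1)] by (auto simp: Sigma_circ_def)

end

theorem lemma4p13:
  fixes sc :: "complex \<Rightarrow> 'h::banach \<Rightarrow> 'h"
    and ip :: "'h \<Rightarrow> 'h \<Rightarrow> complex"
    and W :: "nat \<Rightarrow> 'h set"
    and k :: nat and lam :: "nat list"
  assumes hilb: "is_chilbert sc ip"
    and sep: "\<exists>D::'h set. countable D \<and> closure D = UNIV"
    and infdim: "\<exists>B. cindependent sc B \<and> infinite B"
    and flag: "is_flag sc W"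
    and lam_len: "length lam = k"
    and lam_dec: "\<forall>i j. i \<le> j \<and> j < k \<longrightarrow> lam ! j \<le> lam ! i"
  shows "Sigma_lam sc W k lam =
           (\<Union>J \<in> {J. sorted_wrt (<) J \<and> kdominates k J lam}. Sigma_circ sc W k J)
         \<and> (\<forall>J J'. sorted_wrt (<) J \<and> kdominates k J lam \<and>
                  sorted_wrt (<) J' \<and> kdominates k J' lam \<and> J \<noteq> J' \<longrightarrow>
                  Sigma_circ sc W k J \<inter> Sigma_circ sc W k J' = {})"
proof -
  have "vector_space sc" using vector_space_if_chilbert[OF hilb] .
  then show ?thesis
    using Sigma_lam_iff_Sigma_circ[OF _ flag] Sigma_circ_disjoint[OF _ flag] by blast
qed

end
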